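(* Let $F:[0,1]^{N}\times[0,1]\to\mathbb{R}$ be a non-constant analytic function. For every $\epsilon\in(0,1]$ such that $\Sigma_{\epsilon}\neq\emptyset$, there exists $\delta\in(0,1]$ such that $(\epsilon,\delta)\in A$.
   Context: "Analytic" means real analytic on a neighbourhood of $[0,1]^{N}\times[0,1]$. $\mathcal{F}_{\mathbf{x},\delta}=\{t\in[0,1]:|F(\mathbf{x},t)|\geq\delta\}$. $\Sigma=\{\mathbf{x}\in[0,1]^{N}:F(\mathbf{x},t)=0\ \forall t\in[0,1]\}$, $\Sigma_{\epsilon}=\{\mathbf{x}\in[0,1]^{N}:\operatorname{dist}(\mathbf{x},\Sigma)\geq\epsilon\}$ (with $\Sigma_\epsilon=[0,1]^N$ if $\Sigma=\emptyset$). $A=\{(\epsilon,\delta)\in(0,1]^{2}:\ \forall\mathbf{x}\in\Sigma_{\epsilon},\ \forall\xi\in[0,1],\ (\xi-\tfrac{\epsilon}{2},\xi+\tfrac{\epsilon}{2})\cap\mathcal{F}_{\mathbf{x},\delta}\neq\emptyset\}$. *)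

theory Defs
  imports "HOL-Analysis.Analysis"
begin

definition unit_cube :: "(real ^ 'n) set" where
  "unit_cube = {x. \<forall>i. 0 \<le> x $ i \<and> x $ i \<le> 1}"

text \<open>Real analyticity of a function of (x,t) in R^N x R at a point:
  locally equal to an (unconditionally, hence absolutely) convergent multivariate power series.\<close>
definition real_analytic_at :: "(real ^ 'n \<Rightarrow> real \<Rightarrow> real) \<Rightarrow> real ^ 'n \<Rightarrow> real \<Rightarrow> bool" where
  "real_analytic_at F x0 t0 \<longleftrightarrow>
     (\<exists>r>0. \<exists>c :: ('n \<Rightarrow> nat) \<times> nat \<Rightarrow> real.
        \<forall>x t. dist x x0 < r \<and> \<bar>t - t0\<bar> < r \<longrightarrow>
          ((\<lambda>(\<alpha>, k). c (\<alpha>, k) * (\<Prod>i\<in>UNIV. (x $ i - x0 $ i) ^ (\<alpha> i)) * (t - t0) ^ k)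
             has_sum F x t) UNIV)"

definition analytic_near_cube :: "(real ^ 'n \<Rightarrow> real \<Rightarrow> real) \<Rightarrow> bool" where
  "analytic_near_cube F \<longleftrightarrow>
     (\<exists>U. open U \<and> unit_cube \<times> {0..1} \<subseteq> U \<and> (\<forall>(x, t)\<in>U. real_analytic_at F x t))"

definition Fset :: "(real ^ 'n \<Rightarrow> real \<Rightarrow> real) \<Rightarrow> real ^ 'n \<Rightarrow> real \<Rightarrow> real set" where
  "Fset F x \<delta> = {t \<in> {0..1}. \<bar>F x t\<bar> \<ge> \<delta>}"

definition Sigma0 :: "(real ^ 'n \<Rightarrow> real \<Rightarrow> real) \<Rightarrow> (real ^ 'n) set" where
  "Sigma0 F = {x \<in> unit_cube. \<forall>t\<in>{0..1}. F x t = 0}"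

definition Sigma_eps :: "(real ^ 'n \<Rightarrow> real \<Rightarrow> real) \<Rightarrow> real \<Rightarrow> (real ^ 'n) set" where
  "Sigma_eps F \<epsilon> = (if Sigma0 F = {} then unit_cube
                      else {x \<in> unit_cube. infdist x (Sigma0 F) \<ge> \<epsilon>})"

definition Aset :: "(real ^ 'n \<Rightarrow> real \<Rightarrow> real) \<Rightarrow> (real \<times> real) set" where
  "Aset F = {(\<epsilon>, \<delta>). \<epsilon> \<in> {0<..1} \<and> \<delta> \<in> {0<..1} \<and>
     (\<forall>x\<in>Sigma_eps F \<epsilon>. \<forall>\<xi>\<in>{0..1}.
        {\<xi> - \<epsilon>/2 <..< \<xi> + \<epsilon>/2} \<inter> Fset F x \<delta> \<noteq> {})}"

end

theory Submission
  imports Defs "HOL-Complex_Analysis.Cauchy_Integral_Formula"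
begin

(* For x in Sigma_eps F eps the function F(x,-) is real analytic on [0,1] and not identically
   zero, so by the identity theorem it vanishes on no window (xi - eps/2, xi + eps/2) of [0,1]:
   some t in the window has F(x,t) /= 0.  By continuity |F(y,t)| > |F(x,t)|/2 for all y near x,
   and the same t serves every xi' near xi.  Compactness of Sigma_eps F eps x [0,1] turns these
   local lower bounds into one uniform delta. *)

definition power_series_term ::
  "(('n \<Rightarrow> nat) \<times> nat \<Rightarrow> real) \<Rightarrow> real ^ 'n \<Rightarrow> real \<Rightarrow> real ^ 'n \<Rightarrow> real \<Rightarrow> ('n \<Rightarrow> nat) \<times> nat \<Rightarrow> real"
  where "power_series_term c x0 t0 x t =
    (\<lambda>(\<alpha>, k). c (\<alpha>, k) * (\<Prod>i\<in>UNIV. (x $ i - x0 $ i) ^ (\<alpha> i)) * (t - t0) ^ k)"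

definition total_degree :: "('n::finite \<Rightarrow> nat) \<times> nat \<Rightarrow> nat"
  where "total_degree = (\<lambda>(\<alpha>, k). sum \<alpha> UNIV + k)"

lemma real_analytic_atE:
  assumes "real_analytic_at F x0 t0"
  obtains r c where "r > 0"
    "\<And>x t. dist x x0 < r \<Longrightarrow> \<bar>t - t0\<bar> < r \<Longrightarrow> (power_series_term c x0 t0 x t has_sum F x t) UNIV"
  using assms unfolding real_analytic_at_def power_series_term_def by blast

lemma power_series_term_total_degree_0:
  "total_degree p = 0 \<Longrightarrow> power_series_term c x0 t0 x t p = c p"
  by (cases p) (simp add: total_degree_def power_series_term_def)

lemma power_series_term_diagonal:
  "power_series_term c x0 t0 (x0 + (\<chi> i. h)) (t0 + h) = (\<lambda>p. c p * h ^ total_degree p)"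
  by (auto simp: fun_eq_iff power_series_term_def total_degree_def power_sum power_add)

lemma power_series_term_centre:
  "power_series_term c x0 t0 x0 t (\<alpha>, k) = (if \<alpha> = (\<lambda>_. 0) then c (\<alpha>, k) * (t - t0) ^ k else 0)"
proof (cases "\<alpha> = (\<lambda>_. 0)")
  case False
  then obtain i where "\<alpha> i \<noteq> 0" by auto
  then have "(\<Prod>i\<in>UNIV. (x0 $ i - x0 $ i) ^ \<alpha> i) = (0::real)"
    by (intro prod_zero) auto
  then show ?thesis by (simp add: power_series_term_def False)
qed (simp add: power_series_term_def)

lemma abs_power_series_term_le:
  assumes "\<And>i. \<bar>x $ i - x0 $ i\<bar> \<le> h" "\<bar>t - t0\<bar> \<le> h"
  shows "\<bar>power_series_term c x0 t0 x t p\<bar> \<le> \<bar>c p\<bar> * h ^ total_degree p"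
proof -
  obtain \<alpha> k where p: "p = (\<alpha>, k)" by (cases p)
  have "0 \<le> h" using assms(2) by linarith
  have "\<bar>power_series_term c x0 t0 x t p\<bar>
      = \<bar>c p\<bar> * (\<Prod>i\<in>UNIV. \<bar>x $ i - x0 $ i\<bar> ^ \<alpha> i) * \<bar>t - t0\<bar> ^ k"
    by (simp add: p power_series_term_def abs_mult abs_prod power_abs)
  also have "\<dots> \<le> \<bar>c p\<bar> * (\<Prod>i\<in>UNIV. h ^ \<alpha> i) * h ^ k"
    using assms \<open>0 \<le> h\<close> by (intro mult_mono mult_left_mono prod_mono power_mono conjI)
      (auto intro!: mult_nonneg_nonneg prod_nonneg)
  also have "\<dots> = \<bar>c p\<bar> * h ^ total_degree p"
    by (simp add: p total_degree_def power_sum power_add)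
  finally show ?thesis .
qed

lemma abs_power_series_term_diff_le:
  assumes "0 < \<rho>" "h \<le> \<rho>" "\<And>i. \<bar>x $ i - x0 $ i\<bar> \<le> h" "\<bar>t - t0\<bar> \<le> h"
  shows "\<bar>power_series_term c x0 t0 x t p - power_series_term c x0 t0 x0 t0 p\<bar>
    \<le> h / \<rho> * (\<bar>c p\<bar> * \<rho> ^ total_degree p)"
proof (cases "total_degree p = 0")
  case True
  have "0 \<le> h" using assms(4) by linarith
  with True assms(1) show ?thesis by (simp add: power_series_term_total_degree_0)
next
  case False
  have h: "0 \<le> h / \<rho>" "h / \<rho> \<le> 1" using assms by (auto intro: order.trans[OF abs_ge_zero])
  have "power_series_term c x0 t0 x0 t0 p = 0"
    using abs_power_series_term_le[of x0 x0 0 t0 t0 c p] False by (simp add: zero_power)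
  then have "\<bar>power_series_term c x0 t0 x t p - power_series_term c x0 t0 x0 t0 p\<bar>
      \<le> \<bar>c p\<bar> * h ^ total_degree p"
    using abs_power_series_term_le[OF assms(3,4)] by simp
  also have "\<dots> \<le> \<bar>c p\<bar> * (\<rho> ^ total_degree p * (h / \<rho>))"
  proof -
    have "(h / \<rho>) ^ total_degree p \<le> h / \<rho>"
      using power_decreasing[of 1 "total_degree p" "h / \<rho>"] False h by simp
    moreover have "h ^ total_degree p = \<rho> ^ total_degree p * (h / \<rho>) ^ total_degree p"
      using assms(1) by (simp add: power_divide)
    ultimately have "h ^ total_degree p \<le> \<rho> ^ total_degree p * (h / \<rho>)"
      using assms(1) by (metis less_imp_le mult_left_mono zero_le_power)
    then show ?thesis by (rule mult_left_mono) simp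
  qed
  finally show ?thesis by (simp add: mult_ac)
qed

lemma has_sum_abs_le:
  fixes f g :: "'a \<Rightarrow> real"
  assumes "(f has_sum s) A" "(g has_sum b) A" "\<And>x. x \<in> A \<Longrightarrow> \<bar>f x\<bar> \<le> g x"
  shows "\<bar>s\<bar> \<le> b"
proof -
  have "s \<le> b" using has_sum_mono[OF assms(1,2)] assms(3) by force
  moreover have "- b \<le> s" using has_sum_mono[OF has_sum_uminusI[OF assms(2)] assms(1)] assms(3) by force
  ultimately show ?thesis by linarith
qed

(* Unconditional convergence at the corner point (x0 + (rho,...,rho), t0 + rho) is absolute
   convergence of the majorant series of the coefficients. *)
lemma real_analytic_at_abs_summable:
  fixes F :: "real ^ 'n \<Rightarrow> real \<Rightarrow> real"
  assumes "real_analytic_at F x0 t0"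
  obtains c \<rho> where "\<rho> > 0"
    "(\<lambda>p. \<bar>c p\<bar> * \<rho> ^ total_degree p) summable_on UNIV"
    "\<And>x t. dist x x0 \<le> \<rho> \<Longrightarrow> \<bar>t - t0\<bar> \<le> \<rho> \<Longrightarrow> (power_series_term c x0 t0 x t has_sum F x t) UNIV"
proof -
  obtain r c where r: "r > 0" and hs:
    "\<And>x t. dist x x0 < r \<Longrightarrow> \<bar>t - t0\<bar> < r \<Longrightarrow> (power_series_term c x0 t0 x t has_sum F x t) UNIV"
    using assms by (elim real_analytic_atE) fast
  define N where "N = real CARD('n)"
  define \<rho> where "\<rho> = r / (N + 1)"
  have N: "N \<ge> 1" unfolding N_def by (simp add: Suc_le_eq card_gt_0_iff)
  have \<rho>: "\<rho> > 0" "\<rho> < r" "N * \<rho> < r"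
    using r N by (auto simp: \<rho>_def field_simps)
  have "dist (x0 + (\<chi> i. \<rho>)) x0 = norm ((\<chi> i. \<rho>) :: real ^ 'n)"
    by (simp add: dist_norm)
  also have "\<dots> \<le> (\<Sum>i\<in>UNIV. \<bar>((\<chi> i. \<rho>) :: real ^ 'n) $ i\<bar>)"
    by (rule norm_le_l1_cart)
  also have "\<dots> = N * \<rho>" using \<rho> by (simp add: N_def)
  finally have "((\<lambda>p. c p * \<rho> ^ total_degree p) has_sum F (x0 + (\<chi> i. \<rho>)) (t0 + \<rho>)) UNIV"
    using hs[of "x0 + (\<chi> i. \<rho>)" "t0 + \<rho>"] \<rho> by (simp add: power_series_term_diagonal)
  then have "(\<lambda>p. \<bar>c p * \<rho> ^ total_degree p\<bar>) summable_on UNIV"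
    using summable_on_iff_abs_summable_on_real has_sum_imp_summable by fastforce
  then have "(\<lambda>p. \<bar>c p\<bar> * \<rho> ^ total_degree p) summable_on UNIV"
    using \<rho> by (simp add: abs_mult)
  with \<rho> hs show thesis by (intro that[of \<rho> c]) auto
qed

lemma real_analytic_at_pointwise_Lipschitz:
  fixes F :: "real ^ 'n \<Rightarrow> real \<Rightarrow> real"
  assumes "real_analytic_at F x0 t0"
  obtains \<rho> L where "\<rho> > 0"
    "\<And>x t. dist x x0 \<le> \<rho> \<Longrightarrow> \<bar>t - t0\<bar> \<le> \<rho> \<Longrightarrow> \<bar>F x t - F x0 t0\<bar> \<le> L * max (dist x x0) \<bar>t - t0\<bar>"
proof -
  obtain c \<rho> where \<rho>: "\<rho> > 0" and summable: "(\<lambda>p. \<bar>c p\<bar> * \<rho> ^ total_degree p) summable_on UNIV"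
    and hs: "\<And>x t. dist x x0 \<le> \<rho> \<Longrightarrow> \<bar>t - t0\<bar> \<le> \<rho> \<Longrightarrow> (power_series_term c x0 t0 x t has_sum F x t) UNIV"
    using assms by (elim real_analytic_at_abs_summable) fast
  define M where "M = (\<Sum>\<^sub>\<infinity>p. \<bar>c p\<bar> * \<rho> ^ total_degree p)"
  have "\<bar>F x t - F x0 t0\<bar> \<le> M / \<rho> * max (dist x x0) \<bar>t - t0\<bar>"
    if x: "dist x x0 \<le> \<rho>" and t: "\<bar>t - t0\<bar> \<le> \<rho>" for x t
  proof -
    define h where "h = max (dist x x0) \<bar>t - t0\<bar>"
    have comp: "\<bar>x $ i - x0 $ i\<bar> \<le> h" for i
      using component_le_norm_cart[of "x - x0" i] by (simp add: h_def dist_norm)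
    have "h \<le> \<rho>" "\<bar>t - t0\<bar> \<le> h" using x t by (simp_all add: h_def)
    note term_bound = abs_power_series_term_diff_le[OF \<rho> this(1) comp this(2)]
    have "((\<lambda>p. power_series_term c x0 t0 x t p + - power_series_term c x0 t0 x0 t0 p)
        has_sum (F x t + - F x0 t0)) UNIV"
      using \<rho> x t by (intro has_sum_add has_sum_uminusI hs) auto
    moreover have "((\<lambda>p. h / \<rho> * (\<bar>c p\<bar> * \<rho> ^ total_degree p)) has_sum h / \<rho> * M) UNIV"
      unfolding M_def by (intro has_sum_cmult_right has_sum_infsum summable)
    ultimately have "\<bar>F x t + - F x0 t0\<bar> \<le> h / \<rho> * M"
      by (rule has_sum_abs_le) (use term_bound in simp)
    then show ?thesis by (simp add: h_def mult.commute)
  qed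
  with \<rho> show thesis by (rule that)
qed

lemma real_analytic_at_isCont:
  fixes F :: "real ^ 'n \<Rightarrow> real \<Rightarrow> real"
  assumes "real_analytic_at F x0 t0"
  shows "isCont (\<lambda>(x, t). F x t) (x0, t0)"
  unfolding continuous_at_eps_delta
proof (intro allI impI)
  fix e :: real assume "e > 0"
  obtain \<rho> L where \<rho>: "\<rho> > 0" and Lip:
    "\<And>x t. dist x x0 \<le> \<rho> \<Longrightarrow> \<bar>t - t0\<bar> \<le> \<rho> \<Longrightarrow> \<bar>F x t - F x0 t0\<bar> \<le> L * max (dist x x0) \<bar>t - t0\<bar>"
    using assms by (elim real_analytic_at_pointwise_Lipschitz) fast
  define d where "d = min \<rho> (e / (\<bar>L\<bar> + 1))"
  have "d > 0" using \<rho> \<open>e > 0\<close> by (simp add: d_def)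
  moreover have "dist (F x t) (F x0 t0) < e" if "dist (x, t) (x0, t0) < d" for x t
  proof -
    have h: "max (dist x x0) \<bar>t - t0\<bar> < d"
      using that dist_fst_le[of "(x, t)" "(x0, t0)"] dist_snd_le[of "(x, t)" "(x0, t0)"]
      by (simp add: dist_real_def)
    have "\<bar>F x t - F x0 t0\<bar> \<le> \<bar>L\<bar> * max (dist x x0) \<bar>t - t0\<bar>"
    proof -
      have "\<bar>F x t - F x0 t0\<bar> \<le> L * max (dist x x0) \<bar>t - t0\<bar>"
        using Lip h by (simp add: d_def)
      also have "\<dots> \<le> \<bar>L\<bar> * max (dist x x0) \<bar>t - t0\<bar>"
        by (intro mult_right_mono) auto
      finally show ?thesis .
    qed
    also have "\<dots> \<le> \<bar>L\<bar> * (e / (\<bar>L\<bar> + 1))"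
      using h by (intro mult_left_mono) (auto simp: d_def)
    also have "\<dots> < e"
      using \<open>e > 0\<close> by (simp add: field_simps)
    finally show ?thesis by (simp add: dist_real_def)
  qed
  ultimately show "\<exists>d>0. \<forall>z. dist z (x0, t0) < d \<longrightarrow> dist ((\<lambda>(x, t). F x t) z) ((\<lambda>(x, t). F x t) (x0, t0)) < e"
    by (intro exI[of _ d] conjI allI impI) (auto split: prod.splits)
qed

lemma real_analytic_at_sums:
  fixes F :: "real ^ 'n \<Rightarrow> real \<Rightarrow> real"
  assumes "real_analytic_at F x0 t0"
  shows "\<exists>r>0. \<exists>a. \<forall>t. \<bar>t - t0\<bar> < r \<longrightarrow> (\<lambda>k. a k * (t - t0) ^ k) sums F x0 t"
proof -
  obtain r c where r: "r > 0" and hs: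
    "\<And>x t. dist x x0 < r \<Longrightarrow> \<bar>t - t0\<bar> < r \<Longrightarrow> (power_series_term c x0 t0 x t has_sum F x t) UNIV"
    using assms by (elim real_analytic_atE) fast
  define pure_t :: "nat \<Rightarrow> ('n \<Rightarrow> nat) \<times> nat" where "pure_t = (\<lambda>k. ((\<lambda>_. 0), k))"
  have "(\<lambda>k. c (pure_t k) * (t - t0) ^ k) sums F x0 t" if t: "\<bar>t - t0\<bar> < r" for t
  proof -
    have "power_series_term c x0 t0 x0 t p = 0" if "p \<notin> range pure_t" for p
      using that by (cases p) (auto simp: pure_t_def power_series_term_centre)
    then have "(power_series_term c x0 t0 x0 t has_sum F x0 t) (range pure_t)"
      using hs[OF _ t] r by (subst has_sum_cong_neutral[where T=UNIV]) auto
    then have "((power_series_term c x0 t0 x0 t \<circ> pure_t) has_sum F x0 t) UNIV"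
      by (subst (asm) has_sum_reindex) (auto simp: pure_t_def inj_on_def)
    then show ?thesis
      by (intro has_sum_imp_sums) (simp add: o_def pure_t_def power_series_term_centre)
  qed
  with r show ?thesis by (intro exI[of _ r] conjI exI[of _ "\<lambda>k. c (pure_t k)"]) auto
qed

lemma analytic_continuation_real:
  fixes g :: "real \<Rightarrow> real"
  assumes S: "connected S" and cont: "continuous_on S g"
    and ps: "\<And>t. t \<in> S \<Longrightarrow> \<exists>r>0. \<exists>a. \<forall>s. \<bar>s - t\<bar> < r \<longrightarrow> (\<lambda>k. a k * (s - t) ^ k) sums g s"
    and \<xi>: "\<xi> \<in> S" "\<eta> > 0" "\<And>s. s \<in> S \<Longrightarrow> \<bar>s - \<xi>\<bar> < \<eta> \<Longrightarrow> g s = 0"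
    and "t \<in> S"
  shows "g t = 0"
proof -
  define Z where "Z = {t \<in> S. \<exists>\<eta>>0. \<forall>s\<in>S. \<bar>s - t\<bar> < \<eta> \<longrightarrow> g s = 0}"
  have Z_zero: "g t = 0" if "t \<in> Z" for t
    using that unfolding Z_def by force
  have Z_open: "openin (top_of_set S) Z"
    unfolding openin_euclidean_subtopology_iff
  proof (intro conjI ballI)
    fix t assume "t \<in> Z"
    then obtain \<eta> where "\<eta> > 0" and zero: "\<And>s. s \<in> S \<Longrightarrow> \<bar>s - t\<bar> < \<eta> \<Longrightarrow> g s = 0"
      unfolding Z_def by blast
    have "u \<in> Z" if "u \<in> S" "dist u t < \<eta> / 2" for u
    proof -
      have "g s = 0" if "s \<in> S" "\<bar>s - u\<bar> < \<eta> / 2" for s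
        using zero[OF \<open>s \<in> S\<close>] that \<open>dist u t < \<eta> / 2\<close> unfolding dist_real_def by arith
      with \<open>u \<in> S\<close> \<open>\<eta> > 0\<close> show ?thesis
        unfolding Z_def by (intro CollectI conjI exI[of _ "\<eta> / 2"]) auto
    qed
    with \<open>\<eta> > 0\<close> show "\<exists>e>0. \<forall>u\<in>S. dist u t < e \<longrightarrow> u \<in> Z"
      by (intro exI[of _ "\<eta> / 2"]) auto
  qed (auto simp: Z_def)
  have Z_closed: "closedin (top_of_set S) Z"
    unfolding closedin_limpt
  proof (intro conjI allI impI)
    fix t assume "t islimpt Z \<and> t \<in> S"
    then have lim: "t islimpt Z" and "t \<in> S" by auto
    have "closedin (top_of_set S) {s \<in> S. g s = 0}"
      using cont by (rule continuous_closedin_preimage_constant)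
    moreover have "Z \<subseteq> {s \<in> S. g s = 0}"
      using Z_zero by (auto simp: Z_def)
    then have "t islimpt {s \<in> S. g s = 0}"
      by (rule islimpt_subset[OF lim])
    ultimately have "g t = 0"
      using \<open>t \<in> S\<close> by (auto simp: closedin_limpt)
    obtain r a where r: "r > 0" and sums: "\<And>s. \<bar>s - t\<bar> < r \<Longrightarrow> (\<lambda>k. a k * (s - t) ^ k) sums g s"
      using ps[OF \<open>t \<in> S\<close>] by blast
    have "a 0 = 0"
      using sums[of t] r \<open>g t = 0\<close> by simp
    have a_zero: "a m = 0" for m
    proof (rule ccontr)
      \<comment> \<open>otherwise t would be an isolated zero of g, yet it is a limit point of Z\<close>
      assume "a m \<noteq> 0"
      with \<open>a 0 = 0\<close> have "m > 0" by (cases m) auto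
      obtain s where "s > 0" and nonzero: "\<And>z. z \<in> cball t s - {t} \<Longrightarrow> g z \<noteq> 0"
        using powser_0_nonzero[where a=a and r=r and \<xi>=t and f=g and m=m] r sums \<open>g t = 0\<close> \<open>a m \<noteq> 0\<close> \<open>m > 0\<close>
        by (auto simp: dist_real_def)
      then obtain z where "z \<in> Z" "z \<noteq> t" "dist z t < s"
        using lim unfolding islimpt_approachable by blast
      then show False
        using nonzero[of z] Z_zero by (auto simp: dist_commute)
    qed
    have "g s = 0" if "\<bar>s - t\<bar> < r" for s
    proof -
      have "(\<lambda>k. 0) sums g s"
        using sums[OF that] by (simp add: a_zero)
      then show ?thesis
        using sums_unique2 sums_zero by blast
    qed
    with r \<open>t \<in> S\<close> show "t \<in> Z"
      unfolding Z_def by (intro CollectI conjI exI[of _ r]) auto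
  qed (auto simp: Z_def)
  have "\<xi> \<in> Z"
    using \<xi> unfolding Z_def by blast
  then have "Z = S"
    using connected_clopen[THEN iffD1, OF S] Z_open Z_closed by blast
  with \<open>t \<in> S\<close> show ?thesis
    using Z_zero by blast
qed

lemma analytic_near_cube_real_analytic_at:
  "analytic_near_cube F \<Longrightarrow> x \<in> unit_cube \<Longrightarrow> t \<in> {0..1} \<Longrightarrow> real_analytic_at F x t"
  unfolding analytic_near_cube_def by blast

lemma analytic_near_cube_isCont:
  fixes F :: "real ^ 'n \<Rightarrow> real \<Rightarrow> real"
  assumes "analytic_near_cube F" "x \<in> unit_cube" "t \<in> {0..1}"
  shows "isCont (\<lambda>y. F y t) x" and "isCont (F x) t"
proof -
  have joint: "isCont (\<lambda>(x, t). F x t) (x, t)"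
    by (rule real_analytic_at_isCont analytic_near_cube_real_analytic_at assms)+
  have "isCont ((\<lambda>(x, t). F x t) \<circ> (\<lambda>y. (y, t))) x"
    by (rule continuous_at_compose) (simp_all add: joint)
  then show "isCont (\<lambda>y. F y t) x" by (simp add: o_def)
  have "isCont ((\<lambda>(x, t). F x t) \<circ> Pair x) t"
    by (rule continuous_at_compose) (simp_all add: joint)
  then show "isCont (F x) t" by (simp add: o_def)
qed

lemma analytic_near_cube_nonzero_near:
  fixes F :: "real ^ 'n \<Rightarrow> real \<Rightarrow> real"
  assumes F: "analytic_near_cube F" and x: "x \<in> unit_cube" "x \<notin> Sigma0 F"
    and "\<xi> \<in> {0..1}" "\<eta> > 0"
  shows "\<exists>t\<in>{0..1}. dist t \<xi> < \<eta> \<and> F x t \<noteq> 0"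
proof (rule ccontr)
  assume "\<not> ?thesis"
  then have zero: "F x s = 0" if "s \<in> {0..1}" "\<bar>s - \<xi>\<bar> < \<eta>" for s
    using that by (auto simp: dist_real_def)
  have "F x t = 0" if "t \<in> {0..1}" for t
  proof (rule analytic_continuation_real[OF connected_Icc _ _ \<open>\<xi> \<in> {0..1}\<close> \<open>\<eta> > 0\<close> zero that])
    show "continuous_on {0..1} (F x)"
      using analytic_near_cube_isCont(2)[OF F x(1)] by (simp add: continuous_at_imp_continuous_on)
    show "\<exists>r>0. \<exists>a. \<forall>s. \<bar>s - t\<bar> < r \<longrightarrow> (\<lambda>k. a k * (s - t) ^ k) sums F x s"
      if "t \<in> {0..1}" for t
      by (rule real_analytic_at_sums analytic_near_cube_real_analytic_at F x(1) that)+
  qed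
  with x show False
    unfolding Sigma0_def by blast
qed

lemma Sigma_eps_subset_unit_cube: "Sigma_eps F \<epsilon> \<subseteq> unit_cube"
  unfolding Sigma_eps_def by auto

lemma Sigma_eps_disjoint_Sigma0: "\<epsilon> > 0 \<Longrightarrow> Sigma_eps F \<epsilon> \<inter> Sigma0 F = {}"
  unfolding Sigma_eps_def by auto

lemma compact_Sigma_eps:
  fixes F :: "real ^ 'n \<Rightarrow> real \<Rightarrow> real"
  shows "compact (Sigma_eps F \<epsilon>)"
proof -
  have cube: "unit_cube = cbox (0::real ^ 'n) 1"
    by (auto simp: unit_cube_def mem_box_cart)
  have "closed {x :: real ^ 'n. \<epsilon> \<le> infdist x (Sigma0 F)}"
    by (intro closed_Collect_le continuous_intros)
  then show ?thesis
    unfolding Sigma_eps_def cube by (auto intro: compact_Int_closed simp: Collect_conj_eq)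
qed

lemma Aset_memI:
  assumes "\<epsilon> \<in> {0<..1}" "\<delta> \<in> {0<..1}"
    and "\<And>x \<xi>. x \<in> Sigma_eps F \<epsilon> \<Longrightarrow> \<xi> \<in> {0..1} \<Longrightarrow> \<exists>t\<in>{0..1}. dist t \<xi> < \<epsilon> / 2 \<and> \<delta> \<le> \<bar>F x t\<bar>"
  shows "(\<epsilon>, \<delta>) \<in> Aset F"
proof -
  have "{\<xi> - \<epsilon> / 2<..<\<xi> + \<epsilon> / 2} \<inter> Fset F x \<delta> \<noteq> {}"
    if x: "x \<in> Sigma_eps F \<epsilon>" and \<xi>: "\<xi> \<in> {0..1}" for x \<xi>
  proof -
    obtain t where t: "t \<in> {0..1}" "dist t \<xi> < \<epsilon> / 2" "\<delta> \<le> \<bar>F x t\<bar>"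
      using assms(3)[OF x \<xi>] by blast
    then have "\<xi> - \<epsilon> / 2 < t \<and> t < \<xi> + \<epsilon> / 2"
      unfolding dist_real_def abs_diff_less_iff by blast
    with t have "t \<in> {\<xi> - \<epsilon> / 2<..<\<xi> + \<epsilon> / 2} \<inter> Fset F x \<delta>"
      by (auto simp: Fset_def)
    then show ?thesis by blast
  qed
  with assms(1,2) show ?thesis
    unfolding Aset_def by blast
qed

lemma compact_nonvanishing_imp_uniform_lower_bound:
  fixes F :: "'a::metric_space \<Rightarrow> 'b::metric_space \<Rightarrow> real"
  assumes "compact K" "compact \<Xi>"
    and cont: "\<And>x t. x \<in> K \<Longrightarrow> t \<in> I \<Longrightarrow> continuous (at x within K) (\<lambda>y. F y t)"
    and nonzero: "\<And>x \<xi>. x \<in> K \<Longrightarrow> \<xi> \<in> \<Xi> \<Longrightarrow> \<exists>t\<in>I. dist t \<xi> < r \<and> F x t \<noteq> 0"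
  shows "\<exists>\<delta>>0. \<forall>x\<in>K. \<forall>\<xi>\<in>\<Xi>. \<exists>t\<in>I. dist t \<xi> < r \<and> \<delta> \<le> \<bar>F x t\<bar>"
proof -
  have "\<exists>t d. t \<in> I \<and> dist t \<xi> < r \<and> F x t \<noteq> 0 \<and> d > 0 \<and>
      (\<forall>y\<in>K. dist y x < d \<longrightarrow> \<bar>F x t\<bar> / 2 < \<bar>F y t\<bar>)"
    if x: "x \<in> K" and \<xi>: "\<xi> \<in> \<Xi>" for x \<xi>
  proof -
    obtain t where t: "t \<in> I" "dist t \<xi> < r" "F x t \<noteq> 0"
      using nonzero[OF x \<xi>] by blast
    then have "\<bar>F x t\<bar> / 2 > 0" by simp
    then obtain d where "d > 0" and d: "\<forall>y\<in>K. dist y x < d \<longrightarrow> dist (F y t) (F x t) < \<bar>F x t\<bar> / 2"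
      using cont[OF x \<open>t \<in> I\<close>, unfolded continuous_within_eps_delta, rule_format] by blast
    have "\<bar>F x t\<bar> / 2 < \<bar>F y t\<bar>" if "y \<in> K" "dist y x < d" for y
    proof -
      have "\<bar>F y t - F x t\<bar> < \<bar>F x t\<bar> / 2"
        using d that unfolding dist_real_def by blast
      then show ?thesis by arith
    qed
    with t \<open>d > 0\<close> show ?thesis by blast
  qed
  then obtain t d where td: "\<And>x \<xi>. x \<in> K \<Longrightarrow> \<xi> \<in> \<Xi> \<Longrightarrow> t x \<xi> \<in> I \<and> dist (t x \<xi>) \<xi> < r \<and>
      F x (t x \<xi>) \<noteq> 0 \<and> d x \<xi> > 0 \<and> (\<forall>y\<in>K. dist y x < d x \<xi> \<longrightarrow> \<bar>F x (t x \<xi>)\<bar> / 2 < \<bar>F y (t x \<xi>)\<bar>)"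
    by metis
  define W where "W = (\<lambda>(x, \<xi>). ball x (d x \<xi>) \<times> ball (t x \<xi>) r)"
  have "K \<times> \<Xi> \<subseteq> (\<Union>p\<in>K \<times> \<Xi>. W p)"
  proof
    fix p assume "p \<in> K \<times> \<Xi>"
    then obtain x \<xi> where p: "p = (x, \<xi>)" "x \<in> K" "\<xi> \<in> \<Xi>" by blast
    then have "p \<in> W p"
      using td[of x \<xi>] by (simp add: W_def dist_commute)
    with \<open>p \<in> K \<times> \<Xi>\<close> show "p \<in> (\<Union>p\<in>K \<times> \<Xi>. W p)" by blast
  qed
  moreover have "open (W p)" for p
    by (cases p) (simp add: W_def open_Times)
  moreover have "compact (K \<times> \<Xi>)"
    using assms(1,2) by (rule compact_Times)
  ultimately obtain C where C: "C \<subseteq> K \<times> \<Xi>" "finite C" "K \<times> \<Xi> \<subseteq> (\<Union>p\<in>C. W p)"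
    by (elim compactE_image) auto
  define \<delta> where "\<delta> = Min (insert 1 ((\<lambda>(x, \<xi>). \<bar>F x (t x \<xi>)\<bar> / 2) ` C))"
  have "\<delta> > 0"
    using C td by (auto simp: \<delta>_def)
  moreover have "\<exists>t\<in>I. dist t \<zeta> < r \<and> \<delta> \<le> \<bar>F y t\<bar>" if y: "y \<in> K" and \<zeta>: "\<zeta> \<in> \<Xi>" for y \<zeta>
  proof -
    have "(y, \<zeta>) \<in> (\<Union>p\<in>C. W p)"
      using C(3) y \<zeta> by blast
    then obtain x \<xi> where "(x, \<xi>) \<in> C" "(y, \<zeta>) \<in> W (x, \<xi>)"
      by auto
    then have x\<xi>: "x \<in> K" "\<xi> \<in> \<Xi>" and "dist y x < d x \<xi>" "dist (t x \<xi>) \<zeta> < r"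
      using C(1) by (auto simp: W_def dist_commute)
    have "\<delta> \<le> \<bar>F x (t x \<xi>)\<bar> / 2"
      using C(2) \<open>(x, \<xi>) \<in> C\<close> unfolding \<delta>_def by (intro Min_le) auto
    also have "\<dots> < \<bar>F y (t x \<xi>)\<bar>"
      using td[OF x\<xi>] y \<open>dist y x < d x \<xi>\<close> by blast
    finally show ?thesis
      using td[OF x\<xi>] \<open>dist (t x \<xi>) \<zeta> < r\<close> by (intro bexI[of _ "t x \<xi>"]) auto
  qed
  ultimately show ?thesis by blast
qed

theorem lemma2p3:
  fixes F :: "real ^ 'n \<Rightarrow> real \<Rightarrow> real"
  assumes "analytic_near_cube F"
    and "\<exists>x\<in>unit_cube. \<exists>t\<in>{0..1}. \<exists>y\<in>unit_cube. \<exists>s\<in>{0..1}. F x t \<noteq> F y s"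
    and "\<epsilon> \<in> {0<..1}"
    and "Sigma_eps F \<epsilon> \<noteq> {}"
  shows "\<exists>\<delta>\<in>{0<..1}. (\<epsilon>, \<delta>) \<in> Aset F"
proof -
  have "\<exists>\<delta>>0. \<forall>x\<in>Sigma_eps F \<epsilon>. \<forall>\<xi>\<in>{0..1}. \<exists>t\<in>{0..1}. dist t \<xi> < \<epsilon> / 2 \<and> \<delta> \<le> \<bar>F x t\<bar>"
  proof (rule compact_nonvanishing_imp_uniform_lower_bound)
    fix x assume x: "x \<in> Sigma_eps F \<epsilon>"
    have "x \<in> unit_cube" "x \<notin> Sigma0 F"
      using x Sigma_eps_subset_unit_cube Sigma_eps_disjoint_Sigma0[of \<epsilon> F] assms(3) by auto
    then show "\<exists>t\<in>{0..1}. dist t \<xi> < \<epsilon> / 2 \<and> F x t \<noteq> 0" if "\<xi> \<in> {0..1}" for \<xi>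
      using analytic_near_cube_nonzero_near[OF assms(1) \<open>x \<in> unit_cube\<close> \<open>x \<notin> Sigma0 F\<close> that, of "\<epsilon> / 2"]
        assms(3) by simp
    show "continuous (at x within Sigma_eps F \<epsilon>) (\<lambda>y. F y t)" if "t \<in> {0..1}" for t
      using analytic_near_cube_isCont(1)[OF assms(1) \<open>x \<in> unit_cube\<close> that]
      by (rule continuous_at_imp_continuous_at_within)
  qed (simp_all add: compact_Sigma_eps)
  then obtain \<delta> where "\<delta> > 0"
    and \<delta>: "\<forall>x\<in>Sigma_eps F \<epsilon>. \<forall>\<xi>\<in>{0..1}. \<exists>t\<in>{0..1}. dist t \<xi> < \<epsilon> / 2 \<and> \<delta> \<le> \<bar>F x t\<bar>"
    by blast
  have "(\<epsilon>, min 1 \<delta>) \<in> Aset F"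
  proof (rule Aset_memI[OF assms(3)])
    show "min 1 \<delta> \<in> {0<..1}" using \<open>\<delta> > 0\<close> by simp
    show "\<exists>t\<in>{0..1}. dist t \<xi> < \<epsilon> / 2 \<and> min 1 \<delta> \<le> \<bar>F x t\<bar>"
      if "x \<in> Sigma_eps F \<epsilon>" "\<xi> \<in> {0..1}" for x \<xi>
      using \<delta> that by force
  qed
  then show ?thesis
    using \<open>\<delta> > 0\<close> by force
qed

end
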